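(* For $q\in\mathbb{C}$ with $|q|<1$ and each integer $n\ge0$, let $$K_{n,q}=[2]_q\left(\frac{1}{1-q}\right)^n\sum_{l=0}^n\binom nl(-1)^l\frac{1}{1+q^{l+1}}.$$ Then for every $n\ge 0$, $\lim_{q\to1}K_{n,q}=E_n$, where the Euler numbers $E_n$ are defined by $\frac{2}{e^t+1}=\sum_{n=0}^\infty E_n\frac{t^n}{n!}$ for $|t|<\pi$.
   Context: For $q\in\mathbb{C}$ with $|q|<1$, $[2]_q=1+q$. The limit is taken with $q$ in the open unit disk tending to $1$. *)

theory Defs
  imports "HOL-Analysis.Analysis"
begin

definition q_two :: "complex \<Rightarrow> complex" where
  "q_two q = 1 + q"

definition K_nq :: "nat \<Rightarrow> complex \<Rightarrow> complex" where
  "K_nq n q = q_two q * (1 / (1 - q)) ^ n *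
     (\<Sum>l = 0..n. of_nat (n choose l) * (-1) ^ l * (1 / (1 + q ^ (l + 1))))"

definition euler_E :: "nat \<Rightarrow> real" where
  "euler_E = (THE E. \<forall>t::real. \<bar>t\<bar> < pi \<longrightarrow>
       (\<lambda>n. E n * t ^ n / fact n) sums (2 / (exp t + 1)))"

end

theory Submission
  imports Defs "HOL-Complex_Analysis.Cauchy_Integral_Formula"
begin

(* Both sides satisfy the same recurrence. Multiplying 2/(e^t+1) by e^t+1 and comparing
   Taylor coefficients (Leibniz rule) gives 2 E_n + \<Sum>_{k<n} C(n,k) E_k = 2 [n = 0].
   Expanding \<Sum>_k C(n,k) q^k K_{k,q} by the binomial theorem shows that the K_{n,q} satisfy the
   q-analogue (1 + q^(n+1)) K_{n,q} + q \<Sum>_{k<n} C(n,k) q^k K_{k,q} = (1 + q) [n = 0],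
   which at q = 1 becomes the recurrence for E_n; strong induction on n gives the limit. *)

lemma sum_choose_mult_choose_power:
  fixes x :: "'a::comm_semiring_1"
  assumes "l \<le> n"
  shows "(\<Sum>k=0..n. of_nat (n choose k) * of_nat (k choose l) * x^k)
       = of_nat (n choose l) * x^l * (1+x)^(n-l)"
proof -
  have "(\<Sum>k=0..n. of_nat (n choose k) * of_nat (k choose l) * x^k)
      = (\<Sum>k=l..n. of_nat (n choose k) * of_nat (k choose l) * x^k)"
    by (rule sum.mono_neutral_right) (auto simp: binomial_eq_0)
  also have "\<dots> = (\<Sum>j=0..n-l. of_nat (n choose (j+l)) * of_nat ((j+l) choose l) * x^(j+l))"
    using sum.shift_bounds_cl_nat_ivl[of "\<lambda>k. of_nat (n choose k) * of_nat (k choose l) * x^k" 0 l "n-l"]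
      assms by simp
  also have "\<dots> = (\<Sum>j=0..n-l. of_nat (n choose l) * x^l * (of_nat ((n-l) choose j) * x^j))"
  proof (rule sum.cong[OF refl])
    fix j assume j: "j \<in> {0..n-l}"
    have "(n choose (j+l)) * ((j+l) choose l) = (n choose l) * ((n-l) choose j)"
      using choose_mult[of l "j+l" n] j assms by auto
    then have "of_nat (n choose (j+l)) * of_nat ((j+l) choose l)
        = (of_nat (n choose l) * of_nat ((n-l) choose j) :: 'a)"
      by (simp flip: of_nat_mult)
    then show "of_nat (n choose (j+l)) * of_nat ((j+l) choose l) * x^(j+l)
        = of_nat (n choose l) * x^l * (of_nat ((n-l) choose j) * x^j)"
      by (simp add: power_add mult_ac)
  qed
  also have "\<dots> = of_nat (n choose l) * x^l * (x+1)^(n-l)"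
    by (simp add: sum_distrib_left binomial_ring[of x 1 "n-l"] atLeast0AtMost)
  finally show ?thesis by (simp add: add.commute)
qed

lemma sum_choose_power_sum_choose:
  fixes x :: "'a::comm_semiring_1"
  shows "(\<Sum>k=0..n. of_nat (n choose k) * x^k * (\<Sum>l=0..k. of_nat (k choose l) * b l))
       = (\<Sum>l=0..n. of_nat (n choose l) * x^l * (1+x)^(n-l) * b l)"
proof -
  have "(\<Sum>k=0..n. of_nat (n choose k) * x^k * (\<Sum>l=0..k. of_nat (k choose l) * b l))
      = (\<Sum>k=0..n. \<Sum>l=0..n. of_nat (n choose k) * of_nat (k choose l) * x^k * b l)"
  proof (rule sum.cong[OF refl])
    fix k assume "k \<in> {0..n}"
    then have "(\<Sum>l=0..k. of_nat (k choose l) * b l) = (\<Sum>l=0..n. of_nat (k choose l) * b l)"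
      by (intro sum.mono_neutral_left) (auto simp: binomial_eq_0)
    then show "of_nat (n choose k) * x^k * (\<Sum>l=0..k. of_nat (k choose l) * b l)
        = (\<Sum>l=0..n. of_nat (n choose k) * of_nat (k choose l) * x^k * b l)"
      by (simp add: sum_distrib_left mult_ac)
  qed
  also have "\<dots> = (\<Sum>l=0..n. (\<Sum>k=0..n. of_nat (n choose k) * of_nat (k choose l) * x^k) * b l)"
    by (subst sum.swap) (simp add: sum_distrib_right)
  also have "\<dots> = (\<Sum>l=0..n. of_nat (n choose l) * x^l * (1+x)^(n-l) * b l)"
    by (intro sum.cong refl) (simp add: sum_choose_mult_choose_power)
  finally show ?thesis .
qed

lemma one_plus_power_Suc_neq_zero:
  fixes q :: "'a::real_normed_div_algebra"
  assumes "norm q < 1"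
  shows "1 + q ^ Suc l \<noteq> 0"
proof
  assume "1 + q ^ Suc l = 0"
  then have "norm (q ^ Suc l) = 1"
    by (metis add.commute add_eq_0_iff norm_minus_cancel norm_one)
  moreover have "norm q ^ Suc l < 1"
    using assms by (subst power_less_one_iff) auto
  ultimately show False by (simp only: norm_power)
qed

lemma exp_plus_one_neq_zero:
  fixes z :: complex
  assumes "norm z < pi"
  shows "exp z + 1 \<noteq> 0"
proof
  assume "exp z + 1 = 0"
  then have "exp z = exp (\<i> * pi)" by (simp add: eq_neg_iff_add_eq_0)
  then obtain m :: int where "z = \<i> * pi + of_int (2 * m) * pi * \<i>"
    unfolding exp_eq by blast
  then have "z = of_real ((2 * of_int m + 1) * pi) * \<i>"
    by (simp add: algebra_simps)
  then have "norm z = \<bar>2 * of_int m + 1\<bar> * pi"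
    by (simp only: norm_mult norm_ii norm_of_real) (simp add: abs_mult)
  moreover have "\<bar>2 * m + 1\<bar> \<ge> 1" by presburger
  then have "1 * pi \<le> \<bar>2 * of_int m + 1 :: real\<bar> * pi"
    by (intro mult_right_mono) (simp_all flip: of_int_abs)
  ultimately show False using assms by simp
qed

lemma K_nq_recurrence:
  fixes q :: complex
  assumes q: "norm q < 1"
  shows "(1 + q^(n+1)) * K_nq n q + q * (\<Sum>k<n. of_nat (n choose k) * q^k * K_nq k q)
       = (if n = 0 then 1 + q else 0)"
proof -
  define u where "u = 1 / (1 - q)"
  define b where "b l = (-1)^l / (1 + q^(l+1))" for l
  \<comment> \<open>Since \<open>1 + q u = u\<close>, the binomial transform below collapses to a power of \<open>u\<close>.\<close>
  have "q \<noteq> 1" using q by auto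
  then have u: "1 + q * u = u" "u \<noteq> 0" by (simp_all add: u_def field_simps)
  have K: "K_nq k q = (1+q) * u^k * (\<Sum>l=0..k. of_nat (k choose l) * b l)" for k
    unfolding K_nq_def q_two_def u_def b_def by (simp add: mult_ac)
  have "(\<Sum>k=0..n. of_nat (n choose k) * q^k * K_nq k q)
      = (1+q) * (\<Sum>k=0..n. of_nat (n choose k) * (q*u)^k *
                             (\<Sum>l=0..k. of_nat (k choose l) * b l))"
    unfolding K by (simp add: sum_distrib_left power_mult_distrib mult_ac)
  also have "\<dots> = (1+q) * (\<Sum>l=0..n. of_nat (n choose l) * (q*u)^l * u^(n-l) * b l)"
    by (simp only: sum_choose_power_sum_choose u(1))
  also have "\<dots> = (1+q) * (\<Sum>l=0..n. u^n * (of_nat (n choose l) * q^l * b l))"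
  proof (intro arg_cong[where f = "(*) (1+q)"] sum.cong refl)
    fix l assume "l \<in> {0..n}"
    then have "u^n = u^l * u^(n-l)" by (simp flip: power_add)
    then show "of_nat (n choose l) * (q*u)^l * u^(n-l) * b l
        = u^n * (of_nat (n choose l) * q^l * b l)"
      by (simp add: power_mult_distrib mult_ac)
  qed
  finally have full: "(\<Sum>k=0..n. of_nat (n choose k) * q^k * K_nq k q)
      = (1+q) * u^n * (\<Sum>l=0..n. of_nat (n choose l) * q^l * b l)"
    by (simp only: mult.assoc sum_distrib_left)
  have "(1 + q^(n+1)) * K_nq n q + q * (\<Sum>k<n. of_nat (n choose k) * q^k * K_nq k q)
      = K_nq n q + q * (\<Sum>k=0..n. of_nat (n choose k) * q^k * K_nq k q)"
    by (simp add: atLeast0AtMost lessThan_Suc_atMost[symmetric] algebra_simps)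
  also have "\<dots> = (1+q) * u^n * (\<Sum>l=0..n. of_nat (n choose l) * ((1 + q^(l+1)) * b l))"
    unfolding full K[of n] by (simp add: algebra_simps sum_distrib_left sum.distrib[symmetric])
  also have "\<dots> = (1+q) * u^n * (\<Sum>l=0..n. (-1)^l * of_nat (n choose l))"
    using one_plus_power_Suc_neq_zero[OF q] by (simp add: b_def mult.commute)
  also have "\<dots> = (if n = 0 then 1 + q else 0)"
    using choose_alternating_sum[of n, where 'a=complex] by (simp add: atLeast0AtMost)
  finally show ?thesis .
qed

lemma powser_sums_zero_imp_coeffs_zero:
  fixes a :: "nat \<Rightarrow> 'a::{real_normed_field,banach}"
  assumes r: "r > 0" and sums: "\<And>x. norm x < r \<Longrightarrow> (\<lambda>n. a n * x^n) sums 0"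
  shows "a n = 0"
proof (induction n rule: less_induct)
  case (less m)
  have "(\<lambda>k. a (k + m) * x^k) sums 0" if "x \<noteq> 0" "norm x < r" for x
  proof -
    have "(\<lambda>k. a (k + m) * x^(k + m)) sums 0"
      using sums_iff_shift[of "\<lambda>i. a i * x^i" m 0] sums[OF that(2)] less by simp
    then have "(\<lambda>k. a (k + m) * x^(k + m) / x^m) sums (0 / x^m)"
      by (rule sums_divide)
    then show ?thesis using that by (simp add: power_add)
  qed
  then have "((\<lambda>_. 0) \<longlongrightarrow> a (0 + m)) (at (0::'a))"
    by (intro powser_limit_0_strong[OF r]) simp_all
  then show ?case by (simp add: tendsto_const_iff)
qed

lemma powser_coeffs_unique:
  fixes a b :: "nat \<Rightarrow> 'a::{real_normed_field,banach}"
  assumes "r > 0"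
    and "\<And>x. norm x < r \<Longrightarrow> (\<lambda>n. a n * x^n) sums f x"
    and "\<And>x. norm x < r \<Longrightarrow> (\<lambda>n. b n * x^n) sums f x"
  shows "a = b"
proof
  fix n
  have "a n - b n = 0"
  proof (rule powser_sums_zero_imp_coeffs_zero[OF \<open>r > 0\<close>])
    fix x :: 'a assume "norm x < r"
    with assms(2,3) have "(\<lambda>n. a n * x^n - b n * x^n) sums (f x - f x)"
      by (intro sums_diff)
    then show "(\<lambda>n. (a n - b n) * x^n) sums 0"
      by (simp add: left_diff_distrib)
  qed
  then show "a n = b n" by simp
qed

definition euler_gf :: "complex \<Rightarrow> complex" where
  "euler_gf z = 2 / (exp z + 1)"

lemma holomorphic_euler_gf: "euler_gf holomorphic_on ball 0 pi"
  unfolding euler_gf_def by (intro holomorphic_intros) (auto simp: exp_plus_one_neq_zero)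

lemma euler_gf_real_sums:
  fixes t :: real
  assumes "\<bar>t\<bar> < pi"
  shows "(\<lambda>n. Re ((deriv ^^ n) euler_gf 0) / fact n * t^n) sums (2 / (exp t + 1))"
proof -
  have "(\<lambda>n. (deriv ^^ n) euler_gf 0 / fact n * (of_real t - 0)^n) sums euler_gf (of_real t)"
    using assms by (intro holomorphic_power_series[OF holomorphic_euler_gf]) auto
  moreover have "(deriv ^^ n) euler_gf 0 / fact n * (of_real t - 0)^n
      = (t^n / fact n) *\<^sub>R (deriv ^^ n) euler_gf 0" for n
    by (simp add: scaleR_conv_of_real field_simps)
  moreover have "euler_gf (of_real t) = of_real (2 / (exp t + 1))"
    by (simp add: euler_gf_def exp_of_real)
  ultimately have "(\<lambda>n. t^n / fact n * Re ((deriv ^^ n) euler_gf 0)) sums (2 / (exp t + 1))"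
    using sums_Re by fastforce
  then show ?thesis by (simp add: field_simps)
qed

lemma euler_E_eq_higher_deriv: "euler_E n = Re ((deriv ^^ n) euler_gf 0)"
proof -
  have "euler_E = (\<lambda>n. Re ((deriv ^^ n) euler_gf 0))"
    unfolding euler_E_def
  proof (rule the_equality)
    show "\<forall>t. \<bar>t\<bar> < pi \<longrightarrow>
        (\<lambda>n. Re ((deriv ^^ n) euler_gf 0) * t^n / fact n) sums (2 / (exp t + 1))"
      using euler_gf_real_sums by simp
  next
    fix E :: "nat \<Rightarrow> real"
    assume E: "\<forall>t. \<bar>t\<bar> < pi \<longrightarrow> (\<lambda>n. E n * t^n / fact n) sums (2 / (exp t + 1))"
    have "(\<lambda>n. E n / fact n) = (\<lambda>n. Re ((deriv ^^ n) euler_gf 0) / fact n)"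
      by (rule powser_coeffs_unique[OF pi_gt_zero]) (use E euler_gf_real_sums in auto)
    then show "E = (\<lambda>n. Re ((deriv ^^ n) euler_gf 0))"
      by (auto simp: fun_eq_iff)
  qed
  then show ?thesis by (rule fun_cong)
qed

lemma higher_deriv_exp: "(deriv ^^ n) exp = (exp :: complex \<Rightarrow> complex)"
proof (induction n)
  case (Suc n)
  have "deriv exp = (exp :: complex \<Rightarrow> complex)"
    by (simp add: fun_eq_iff DERIV_imp_deriv[OF DERIV_exp])
  then show ?case using Suc by simp
qed simp

lemma higher_deriv_euler_gf_recurrence:
  "2 * (deriv ^^ n) euler_gf 0 + (\<Sum>i<n. of_nat (n choose i) * (deriv ^^ i) euler_gf 0)
     = (if n = 0 then 2 else 0)"
proof -
  have exp_plus_one: "(\<lambda>w. exp w + 1) holomorphic_on ball 0 pi" by (intro holomorphic_intros)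
  have "eventually (\<lambda>w. w \<in> ball 0 pi) (nhds (0::complex))"
    by (intro eventually_nhds_in_open) auto
  then have "eventually (\<lambda>w. euler_gf w * (exp w + 1) = 2) (nhds 0)"
  proof (rule eventually_mono)
    fix w :: complex assume "w \<in> ball 0 pi"
    then have "exp w + 1 \<noteq> 0" by (intro exp_plus_one_neq_zero) simp
    then show "euler_gf w * (exp w + 1) = 2" by (simp add: euler_gf_def field_simps)
  qed
  then have "(deriv ^^ n) (\<lambda>w. euler_gf w * (exp w + 1)) 0 = (deriv ^^ n) (\<lambda>w. 2) 0"
    by (rule higher_deriv_cong_ev[OF _ refl])
  then have lhs: "(deriv ^^ n) (\<lambda>w. euler_gf w * (exp w + 1)) 0 = (if n = 0 then 2 else 0)"
    by simp
  have higher_deriv_exp_plus_one: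
    "(deriv ^^ k) (\<lambda>w. exp w + 1) (0::complex) = (if k = 0 then 2 else 1)" for k
  proof -
    have "(deriv ^^ k) (\<lambda>w. exp w + 1) 0
        = (deriv ^^ k) exp 0 + (deriv ^^ k) (\<lambda>_. 1) (0::complex)"
      by (rule higher_deriv_add[where S = UNIV]) (auto intro: holomorphic_intros)
    then show ?thesis by (cases "k = 0") (simp_all add: higher_deriv_exp)
  qed
  have "(deriv ^^ n) (\<lambda>w. euler_gf w * (exp w + 1)) 0
      = (\<Sum>i=0..n. of_nat (n choose i) * (deriv ^^ i) euler_gf 0 *
                    (deriv ^^ (n-i)) (\<lambda>w. exp w + 1) 0)"
    by (rule higher_deriv_mult[OF holomorphic_euler_gf exp_plus_one]) auto
  also have "\<dots> = (\<Sum>i\<le>n. of_nat (n choose i) * (deriv ^^ i) euler_gf 0 +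
                    (if i = n then (deriv ^^ n) euler_gf 0 else 0))"
    unfolding atLeast0AtMost by (intro sum.cong refl) (simp add: higher_deriv_exp_plus_one)
  also have "\<dots> = 2 * (deriv ^^ n) euler_gf 0 +
                    (\<Sum>i<n. of_nat (n choose i) * (deriv ^^ i) euler_gf 0)"
    by (simp add: sum.distrib lessThan_Suc_atMost[symmetric])
  finally show ?thesis using lhs by simp
qed

lemma euler_E_recurrence:
  "2 * euler_E n + (\<Sum>i<n. real (n choose i) * euler_E i) = (if n = 0 then 2 else 0)"
  using arg_cong[where f = Re, OF higher_deriv_euler_gf_recurrence[of n]]
  by (simp add: euler_E_eq_higher_deriv Re_sum)

theorem mainTheorem4:
  fixes n :: nat
  shows "(K_nq n \<longlongrightarrow> complex_of_real (euler_E n)) (at 1 within ball 0 1)"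
proof (induction n rule: less_induct)
  case (less n)
  define c :: complex where "c = (if n = 0 then 1 else 0)"
  define S where "S q = (\<Sum>k<n. of_nat (n choose k) * q^k * K_nq k q)" for q
  define E where "E = (\<Sum>k<n. of_nat (n choose k) * complex_of_real (euler_E k))"
  have "(c * (1 + q) - q * S q) / (1 + q^(n+1)) = K_nq n q" if "q \<in> ball 0 1" for q
    using K_nq_recurrence[of q n] one_plus_power_Suc_neq_zero[of q n] that
    by (auto simp: c_def S_def field_simps)
  then have "eventually (\<lambda>q. (c * (1 + q) - q * S q) / (1 + q^(n+1)) = K_nq n q)
      (at 1 within ball 0 1)"
    by (auto simp: eventually_at_filter)
  moreover have "(S \<longlongrightarrow> E) (at 1 within ball 0 1)"
    unfolding S_def E_def by (auto intro!: tendsto_eq_intros less.IH)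
  then have "((\<lambda>q. (c * (1 + q) - q * S q) / (1 + q^(n+1))) \<longlongrightarrow> (2 * c - E) / 2)
      (at 1 within ball 0 1)"
    by (auto intro!: tendsto_eq_intros)
  moreover have "(2 * c - E) / 2 = complex_of_real (euler_E n)"
    using arg_cong[where f = complex_of_real, OF euler_E_recurrence[of n]]
    by (auto simp: c_def E_def of_real_sum field_simps split: if_splits)
  ultimately show ?case
    by (auto intro: Lim_transform_eventually)
qed

end
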